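(* Let $\lambda$ be a partition of $n$, let $\mathrm{Tab}(\lambda)$ be the set of standard tableaux of shape $\lambda$, and let $\aleph_\lambda$ be the bottom tableau of shape $\lambda$. Suppose $f(x_1,\dots,x_n)=\sum_{t\in \mathrm{Tab}(\lambda)} c_t\,\Delta^x_t$ with coefficients $c_t$ in a field of characteristic $0$ not depending on $x_1,\dots,x_n$. Then $\Delta^x_{\aleph_\lambda}(\aleph_\lambda)\neq 0$ and $$c_{\aleph_\lambda}=\frac{f(\aleph_\lambda)}{\Delta^x_{\aleph_\lambda}(\aleph_\lambda)}.$$
   Context: Diagrams are drawn in French convention: rows are numbered $0,1,2,\dots$ from the bottom, columns $0,1,\dots$ from the left. A standard tableau of shape $\lambda$ is a bijective filling of the boxes of the diagram of $\lambda$ with $1,\dots,n$, increasing from left to right in rows and from bottom to top in columns. For distinct indices, $\Delta^x(i_1,\dots,i_k)=\prod_{1\le p<q\le k}(x_{i_p}-x_{i_q})$. The Specht polynomial of a tableau $t$ is $\Delta^x_t=\prod_{\text{columns } C \text{ of } t}\Delta^x(\text{entries of } C \text{ read from bottom to top})$. The bottom tableau $\aleph_\lambda$ is the standard tableau whose rows, from the bottom row upwards, are filled with consecutive integers (each row from left to right). For a tableau $t$ and a function $f(x_1,\dots,x_n)$, $f(t)$ denotes the specialization $x_i\mapsto r$, where $r$ is the row index of the box of $t$ containing $i$. *)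

theory Defs
  imports Main
begin

text \<open>A partition is a list of positive parts, weakly decreasing; part i is the length
  of row i (rows numbered from the bottom, French convention).\<close>
definition is_partition :: "nat list \<Rightarrow> nat \<Rightarrow> bool" where
  "is_partition lam n \<longleftrightarrow> sorted (rev lam) \<and> (\<forall>p\<in>set lam. 0 < p) \<and> sum_list lam = n"

definition diagram :: "nat list \<Rightarrow> (nat \<times> nat) set" where
  "diagram lam = {(r, c). r < length lam \<and> c < lam ! r}"

type_synonym tableau = "nat \<times> nat \<Rightarrow> nat"

definition standard_tableaux :: "nat list \<Rightarrow> tableau set" where
  "standard_tableaux lam = {t.
     bij_betw t (diagram lam) {1..sum_list lam}
   \<and> (\<forall>b. b \<notin> diagram lam \<longrightarrow> t b = 0)
   \<and> (\<forall>r c. (r, c) \<in> diagram lam \<and> (r, Suc c) \<in> diagram lam \<longrightarrow> t (r, c) < t (r, Suc c))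
   \<and> (\<forall>r c. (r, c) \<in> diagram lam \<and> (Suc r, c) \<in> diagram lam \<longrightarrow> t (r, c) < t (Suc r, c))}"

definition specht :: "nat list \<Rightarrow> tableau \<Rightarrow> (nat \<Rightarrow> 'a::comm_ring_1) \<Rightarrow> 'a" where
  "specht lam t x = (\<Prod>(p, q, c) \<in> {(p, q, c). p < q \<and> (p, c) \<in> diagram lam \<and> (q, c) \<in> diagram lam}.
       x (t (p, c)) - x (t (q, c)))"

definition bottom_tableau :: "nat list \<Rightarrow> tableau" where
  "bottom_tableau lam = (\<lambda>(r, c). if (r, c) \<in> diagram lam then sum_list (take r lam) + c + 1 else 0)"

definition row_of :: "nat list \<Rightarrow> tableau \<Rightarrow> nat \<Rightarrow> nat" where
  "row_of lam t i = fst (THE b. b \<in> diagram lam \<and> t b = i)"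

text \<open>Specialization f(t): x_i \<mapsto> row index of i in t.\<close>
definition specialize :: "nat list \<Rightarrow> tableau \<Rightarrow> nat \<Rightarrow> 'a::semiring_1" where
  "specialize lam t = (\<lambda>i. of_nat (row_of lam t i))"

end

theory Submission
  imports Defs
begin

text \<open>Specialising at the bottom tableau \<open>\<aleph>\<close> sends \<open>x\<^sub>i\<close> to the row of \<open>i\<close> in \<open>\<aleph>\<close>, which is weakly
  increasing in \<open>i\<close>. If \<open>\<Delta>\<^sub>t(\<aleph>) \<noteq> 0\<close> for a standard tableau \<open>t\<close>, the entries of each column of \<open>t\<close>
  therefore lie in strictly increasing rows of \<open>\<aleph>\<close>, so the entry of \<open>t\<close> in box \<open>(r, c)\<close> lies in
  row \<open>r\<close> of \<open>\<aleph>\<close> or higher; together with the increase along rows this gives \<open>\<aleph> \<le> t\<close> boxwise.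
  Both fillings use each of \<open>1, \<dots>, n\<close> once, so their sums agree and \<open>t = \<aleph>\<close>. Hence evaluating
  \<open>f\<close> at \<open>\<aleph>\<close> kills every term except \<open>c\<^sub>\<aleph> \<Delta>\<^sub>\<aleph>(\<aleph>)\<close>, and \<open>\<Delta>\<^sub>\<aleph>(\<aleph>) \<noteq> 0\<close> because the boxes of a
  column of \<open>\<aleph>\<close> lie in distinct rows.\<close>

lemma diagram_eq_Sigma: "diagram lam = Sigma {..<length lam} (\<lambda>r. {..<lam ! r})"
  unfolding diagram_def by auto

lemma finite_diagram: "finite (diagram lam)"
  unfolding diagram_eq_Sigma by auto

lemma card_diagram: "card (diagram lam) = sum_list lam"
  unfolding diagram_eq_Sigma by (simp add: sum_list_sum_nth atLeast0LessThan)

lemma diagram_Suc_row_imp_diagram: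
  assumes "is_partition lam n" and "(Suc r, c) \<in> diagram lam"
  shows "(r, c) \<in> diagram lam"
proof -
  have "sorted (rev lam)" using assms(1) unfolding is_partition_def by simp
  moreover have "Suc r < length lam" "c < lam ! Suc r" using assms(2) unfolding diagram_def by auto
  ultimately show ?thesis using sorted_rev_nth_mono[of lam r "Suc r"] unfolding diagram_def by auto
qed

lemma diagram_Suc_col_imp_diagram: "(r, Suc c) \<in> diagram lam \<Longrightarrow> (r, c) \<in> diagram lam"
  unfolding diagram_def by auto

lemma sum_list_take_Suc:
  "r < length xs \<Longrightarrow> sum_list (take (Suc r) xs) = sum_list (take r xs) + xs ! r"
  by (simp add: take_Suc_conv_app_nth)

lemma sum_list_take_mono:
  fixes xs :: "'a::canonically_ordered_monoid_add list"
  assumes "i \<le> j"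
  shows "sum_list (take i xs) \<le> sum_list (take j xs)"
proof -
  have "take j xs = take i xs @ take (j - i) (drop i xs)"
    using take_add[of i "j - i" xs] assms by simp
  then show ?thesis by (metis le_iff_add sum_list_append)
qed

lemma bottom_tableau_apply:
  "(r, c) \<in> diagram lam \<Longrightarrow> bottom_tableau lam (r, c) = sum_list (take r lam) + c + 1"
  unfolding bottom_tableau_def by simp

lemma bottom_tableau_bounds:
  assumes "(r, c) \<in> diagram lam"
  shows "sum_list (take r lam) < bottom_tableau lam (r, c)"
    and "bottom_tableau lam (r, c) \<le> sum_list (take (Suc r) lam)"
  using assms bottom_tableau_apply[OF assms] sum_list_take_Suc[of r lam]
  unfolding diagram_def by auto

lemma bottom_tableau_le_imp_row_le:
  assumes "b \<in> diagram lam" "b' \<in> diagram lam" "bottom_tableau lam b \<le> bottom_tableau lam b'"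
  shows "fst b \<le> fst b'"
proof (rule ccontr)
  obtain r c r' c' where b: "b = (r, c)" and b': "b' = (r', c')" by force
  assume "\<not> fst b \<le> fst b'"
  then have "Suc r' \<le> r" using b b' by auto
  then have "bottom_tableau lam b' \<le> sum_list (take r lam)"
    using bottom_tableau_bounds(2)[of r' c' lam] sum_list_take_mono[of "Suc r'" r lam] assms(2) b'
    by auto
  also have "\<dots> < bottom_tableau lam b" using bottom_tableau_bounds(1) assms(1) b by auto
  finally show False using assms(3) by simp
qed

lemma inj_on_bottom_tableau: "inj_on (bottom_tableau lam) (diagram lam)"
proof (rule inj_onI)
  fix b b' assume b: "b \<in> diagram lam" "b' \<in> diagram lam"
    and eq: "bottom_tableau lam b = bottom_tableau lam b'"
  then have "fst b = fst b'"
    using bottom_tableau_le_imp_row_le[of b lam b'] bottom_tableau_le_imp_row_le[of b' lam b] by auto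
  with b eq show "b = b'" by (cases b, cases b') (auto simp: bottom_tableau_apply)
qed

lemma bij_betw_bottom_tableau: "bij_betw (bottom_tableau lam) (diagram lam) {1..sum_list lam}"
proof -
  have "bottom_tableau lam ` diagram lam \<subseteq> {1..sum_list lam}"
  proof
    fix i assume "i \<in> bottom_tableau lam ` diagram lam"
    then obtain r c where rc: "(r, c) \<in> diagram lam" and i: "i = bottom_tableau lam (r, c)" by auto
    have "Suc r \<le> length lam" using rc unfolding diagram_def by simp
    then have "sum_list (take (Suc r) lam) \<le> sum_list lam"
      using sum_list_take_mono[of "Suc r" "length lam" lam] by simp
    then show "i \<in> {1..sum_list lam}" using bottom_tableau_bounds[OF rc] i by auto
  qed
  moreover have "card (bottom_tableau lam ` diagram lam) = card {1..sum_list lam}"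
    using card_image[OF inj_on_bottom_tableau] card_diagram by simp
  ultimately show ?thesis
    using inj_on_bottom_tableau card_subset_eq[of "{1..sum_list lam}"] unfolding bij_betw_def by simp
qed

lemma bottom_tableau_standard:
  assumes "is_partition lam n"
  shows "bottom_tableau lam \<in> standard_tableaux lam"
  unfolding standard_tableaux_def
proof (intro CollectI conjI allI impI)
  show "bij_betw (bottom_tableau lam) (diagram lam) {1..sum_list lam}"
    by (rule bij_betw_bottom_tableau)
next
  fix b assume "b \<notin> diagram lam"
  then show "bottom_tableau lam b = 0" unfolding bottom_tableau_def by (cases b) auto
next
  fix r c assume "(r, c) \<in> diagram lam \<and> (Suc r, c) \<in> diagram lam"
  then show "bottom_tableau lam (r, c) < bottom_tableau lam (Suc r, c)"
    using bottom_tableau_bounds[of r c lam] bottom_tableau_bounds[of "Suc r" c lam] by auto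
qed (auto simp: bottom_tableau_apply)

lemma bottom_tableau_image: "bottom_tableau lam ` diagram lam = {1..sum_list lam}"
  using bij_betw_bottom_tableau by (rule bij_betw_imp_surj_on)

lemma row_of_bottom_tableau:
  "b \<in> diagram lam \<Longrightarrow> row_of lam (bottom_tableau lam) (bottom_tableau lam b) = fst b"
  unfolding row_of_def
  by (rule arg_cong[where f = fst], rule the_equality) (auto dest: inj_onD[OF inj_on_bottom_tableau])

lemma row_of_bottom_tableau_mono:
  assumes "i \<in> {1..sum_list lam}" "j \<in> {1..sum_list lam}" "i \<le> j"
  shows "row_of lam (bottom_tableau lam) i \<le> row_of lam (bottom_tableau lam) j"
proof -
  obtain b b' where "b \<in> diagram lam" "i = bottom_tableau lam b"
    and "b' \<in> diagram lam" "j = bottom_tableau lam b'"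
    using assms(1,2) unfolding bottom_tableau_image[symmetric] by blast
  with assms(3) show ?thesis by (simp add: row_of_bottom_tableau bottom_tableau_le_imp_row_le)
qed

lemma le_row_of_bottom_tableau_imp_less:
  assumes "i \<in> {1..sum_list lam}" "r \<le> row_of lam (bottom_tableau lam) i"
  shows "sum_list (take r lam) < i"
proof -
  obtain r' c' where rc': "(r', c') \<in> diagram lam" and i: "i = bottom_tableau lam (r', c')"
    using assms(1) unfolding bottom_tableau_image[symmetric] by force
  then have "r \<le> r'" using assms(2) by (simp add: row_of_bottom_tableau)
  then show ?thesis
    using sum_list_take_mono[of r r' lam] bottom_tableau_bounds(1)[OF rc'] i by simp
qed

lemma finite_specht_index:
  "finite {(p, q, c). p < q \<and> (p, c) \<in> diagram lam \<and> (q, c) \<in> diagram lam}"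
proof (rule finite_subset)
  show "{(p, q, c). p < q \<and> (p, c) \<in> diagram lam \<and> (q, c) \<in> diagram lam}
     \<subseteq> (\<lambda>((p, c), (q, c')). (p, q, c)) ` (diagram lam \<times> diagram lam)"
    by (auto simp: image_iff) force
qed (simp add: finite_diagram)

lemma specht_nonzero_iff:
  "specht lam t x \<noteq> (0::'a::idom) \<longleftrightarrow>
    (\<forall>p q c. p < q \<and> (p, c) \<in> diagram lam \<and> (q, c) \<in> diagram lam \<longrightarrow> x (t (p, c)) \<noteq> x (t (q, c)))"
  unfolding specht_def using finite_specht_index[of lam] by auto

lemma specht_bottom_tableau_nonzero:
  "specht lam (bottom_tableau lam) (specialize lam (bottom_tableau lam)) \<noteq> (0::'a::{idom, ring_char_0})"
  unfolding specht_nonzero_iff specialize_def by (auto simp: row_of_bottom_tableau)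

lemma standard_tableauxD:
  assumes "t \<in> standard_tableaux lam"
  shows "bij_betw t (diagram lam) {1..sum_list lam}"
    and "b \<notin> diagram lam \<Longrightarrow> t b = 0"
    and "(r, c) \<in> diagram lam \<Longrightarrow> (r, Suc c) \<in> diagram lam \<Longrightarrow> t (r, c) < t (r, Suc c)"
    and "(r, c) \<in> diagram lam \<Longrightarrow> (Suc r, c) \<in> diagram lam \<Longrightarrow> t (r, c) < t (Suc r, c)"
  using assms by (simp_all add: standard_tableaux_def) (metis surj_pair)

lemma finite_standard_tableaux: "finite (standard_tableaux lam)"
proof (rule finite_subset)
  show "standard_tableaux lam \<subseteq>
     {t. \<forall>b. (b \<in> diagram lam \<longrightarrow> t b \<in> {1..sum_list lam}) \<and> (b \<notin> diagram lam \<longrightarrow> t b = 0)}"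
    unfolding standard_tableaux_def bij_betw_def by auto
qed (rule finite_set_of_finite_funs, auto simp: finite_diagram)

lemma row_le_bottom_row_of_entry:
  assumes "is_partition lam n" and t: "t \<in> standard_tableaux lam"
    and nz: "specht lam t (specialize lam (bottom_tableau lam)) \<noteq> (0::'a::idom)"
    and "(r, c) \<in> diagram lam"
  shows "r \<le> row_of lam (bottom_tableau lam) (t (r, c))"
  using assms(4)
proof (induction r)
  case (Suc r)
  let ?row = "row_of lam (bottom_tableau lam)"
  have below: "(r, c) \<in> diagram lam"
    using diagram_Suc_row_imp_diagram[OF assms(1) Suc.prems] .
  have "t (r, c) \<in> {1..sum_list lam}" "t (Suc r, c) \<in> {1..sum_list lam}"
    using bij_betw_apply[OF standard_tableauxD(1)[OF t]] below Suc.prems by blast+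
  then have "?row (t (r, c)) \<le> ?row (t (Suc r, c))"
    using row_of_bottom_tableau_mono standard_tableauxD(4)[OF t below Suc.prems] by simp
  moreover have "?row (t (r, c)) \<noteq> ?row (t (Suc r, c))"
    using nz below Suc.prems unfolding specht_nonzero_iff specialize_def by fastforce
  ultimately show ?case using Suc.IH[OF below] by linarith
qed simp

lemma bottom_tableau_le_entry:
  assumes "is_partition lam n" and t: "t \<in> standard_tableaux lam"
    and nz: "specht lam t (specialize lam (bottom_tableau lam)) \<noteq> (0::'a::idom)"
    and "(r, c) \<in> diagram lam"
  shows "bottom_tableau lam (r, c) \<le> t (r, c)"
  using assms(4)
proof (induction c)
  case 0
  have "t (r, 0) \<in> {1..sum_list lam}"
    using standard_tableauxD(1)[OF t] 0 by (rule bij_betw_apply)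
  then have "sum_list (take r lam) < t (r, 0)"
    using le_row_of_bottom_tableau_imp_less row_le_bottom_row_of_entry[OF assms(1-3) 0] by blast
  then show ?case by (simp add: bottom_tableau_apply[OF 0])
next
  case (Suc c)
  have "(r, c) \<in> diagram lam" using diagram_Suc_col_imp_diagram[OF Suc.prems] .
  then show ?case
    using Suc.IH standard_tableauxD(3)[OF t _ Suc.prems] Suc.prems by (simp add: bottom_tableau_apply)
qed

lemma specht_nonzero_at_bottom_tableau_imp_eq:
  assumes "is_partition lam n" and t: "t \<in> standard_tableaux lam"
    and nz: "specht lam t (specialize lam (bottom_tableau lam)) \<noteq> (0::'a::idom)"
  shows "t = bottom_tableau lam"
proof
  fix b show "t b = bottom_tableau lam b"
  proof (cases "b \<in> diagram lam")
    case True
    have "sum (bottom_tableau lam) (diagram lam) = sum t (diagram lam)"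
      using sum.reindex_bij_betw[OF bij_betw_bottom_tableau, of id lam]
        sum.reindex_bij_betw[OF standard_tableauxD(1)[OF t], of id] by simp
    moreover have "\<And>b. b \<in> diagram lam \<Longrightarrow> bottom_tableau lam b \<le> t b"
      using bottom_tableau_le_entry[OF assms] by force
    ultimately show ?thesis using sum_mono_inv True finite_diagram by metis
  next
    case False
    then show ?thesis
      using standard_tableauxD(2)[OF t] standard_tableauxD(2)[OF bottom_tableau_standard[OF assms(1)]]
      by simp
  qed
qed

theorem mainTheorem1:
  fixes lam :: "nat list" and n :: nat
    and c :: "tableau \<Rightarrow> 'a::field_char_0"
    and f :: "(nat \<Rightarrow> 'a) \<Rightarrow> 'a"
  assumes "is_partition lam n"
    and "\<And>x. f x = (\<Sum>t\<in>standard_tableaux lam. c t * specht lam t x)"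
  shows "specht lam (bottom_tableau lam) (specialize lam (bottom_tableau lam)) \<noteq> (0::'a) \<and>
         c (bottom_tableau lam) =
           f (specialize lam (bottom_tableau lam)) /
           specht lam (bottom_tableau lam) (specialize lam (bottom_tableau lam))"
proof -
  define B where "B = bottom_tableau lam"
  define s where "s = (specialize lam B :: nat \<Rightarrow> 'a)"
  have nz: "specht lam B s \<noteq> 0"
    unfolding B_def s_def by (rule specht_bottom_tableau_nonzero)
  have "f s = (\<Sum>t\<in>standard_tableaux lam. c t * specht lam t s)" by (fact assms(2))
  also have "\<dots> = (\<Sum>t\<in>{B}. c t * specht lam t s)"
  proof (rule sum.mono_neutral_right)
    show "\<forall>t\<in>standard_tableaux lam - {B}. c t * specht lam t s = 0"
    proof
      fix t assume "t \<in> standard_tableaux lam - {B}"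
      then have "specht lam t s = 0"
        using specht_nonzero_at_bottom_tableau_imp_eq[OF assms(1), of t] unfolding B_def s_def by blast
      then show "c t * specht lam t s = 0" by simp
    qed
  qed (auto simp: finite_standard_tableaux bottom_tableau_standard[OF assms(1)] B_def)
  finally have "f s = c B * specht lam B s" by simp
  with nz show ?thesis unfolding B_def s_def by simp
qed

end
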